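(* For every $\varepsilon>0$ there exists $n_0\in\mathbb{N}$ such that $\int_{Q_n}\tau\,d\mu_n\ge 2(1-\varepsilon)n$ for all $n\ge n_0$.
   Context: $\mathbb{F}_2((x^{-1}))$ is the field of formal series $r=\sum_{z\in\mathbb{Z}}a_zx^z$, $a_z\in\mathbb{F}_2$, with $a_z\neq0$ for only finitely many positive $z$ (usual addition and Cauchy multiplication); $\mathbb{F}_2[x]$ is a subring. $\deg(r)=\max\{z: a_z\ne 0\}$. The polynomial part is $[r]=\sum_{z\ge0}a_zx^z\in\mathbb{F}_2[x]$. Define $S(r)=\frac{r}{x+1}$ if $[r](1)=0$ and $S(r)=\frac{xr}{x+1}$ if $[r](1)=1$. For $r$ with $\deg(r)\ge0$, $\tau(r)$ is the least $k\in\mathbb{N}$ with $[S^k(r)]=1$ (this is finite). For $n\in\mathbb{N}$, $Q_n=\{r:\deg(r)=n\}$ and $\mu_n$ is the probability measure on $Q_n$ under which the coefficients $a_{n-1},a_{n-2},\dots$ of $r$ are independent and uniform in $\mathbb{F}_2$. *)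

theory Defs
  imports "HOL-Probability.Probability" "HOL-Library.Z2"
    "HOL-Computational_Algebra.Formal_Laurent_Series"
    "HOL-Computational_Algebra.Polynomial"
begin

text \<open>The field F_2((x^{-1})) is represented as bit fls, i.e. formal Laurent series
  (finitely many negative powers) in the variable y = x^{-1} over F_2 = bit.
  The coefficient a_z of x^z is the coefficient of y^{-z}.\<close>

definition xx :: "bit fls" where
  "xx = fls_X_inv"

definition coeffx :: "bit fls \<Rightarrow> int \<Rightarrow> bit" where
  "coeffx r z = fls_nth r (- z)"

definition degx :: "bit fls \<Rightarrow> int" where
  "degx r = - fls_subdegree r"

definition polypart :: "bit fls \<Rightarrow> bit poly" where
  "polypart r = Poly (map (\<lambda>i. coeffx r (int i)) [0..<nat (degx r) + 1])"

definition S :: "bit fls \<Rightarrow> bit fls" where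
  "S r = (if poly (polypart r) 1 = 0 then r / (xx + 1) else (xx * r) / (xx + 1))"

definition tau :: "bit fls \<Rightarrow> nat" where
  "tau r = (LEAST k. polypart ((S ^^ k) r) = 1)"

definition Q :: "nat \<Rightarrow> bit fls set" where
  "Q n = {r. r \<noteq> 0 \<and> degx r = int n}"

text \<open>Uniform distribution on F_2, and the element of Q_n with leading coefficient
  a_n = 1 and a_{n-1-i} = c i.\<close>
definition coin :: "bit measure" where
  "coin = measure_pmf (pmf_of_set (UNIV :: bit set))"

definition r_of :: "nat \<Rightarrow> (nat \<Rightarrow> bit) \<Rightarrow> bit fls" where
  "r_of n c = Abs_fls (\<lambda>m. if m < - int n then 0
                            else if m = - int n then 1
                            else c (nat (m + int n) - 1))"

definition mu :: "nat \<Rightarrow> bit fls measure" where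
  "mu n = embed_measure (PiM (UNIV :: nat set) (\<lambda>_. coin)) (r_of n)"

end

theory Submission
  imports Defs
begin

text \<open>
  On polynomial parts, \<open>S\<close> acts by \<open>p \<mapsto> p / (x + 1)\<close> if \<open>p(1) = 0\<close> and by
  \<open>p \<mapsto> (x p + 1) / (x + 1)\<close> otherwise, so \<open>\<tau>\<close> is the time this map on \<open>F\<^sub>2[x]\<close> needs to
  reach \<open>1\<close>. A step lowers the degree by at most one, hence \<open>\<tau> r = n + \<tau> (S\<^sup>n r)\<close> for
  \<open>r \<in> Q\<^sub>n\<close>. The degree \<open>m\<close> of \<open>[S\<^sup>n r]\<close> is the number of odd steps among the first \<open>n\<close>,
  and the parity sequence determines the \<open>n\<close> random coefficients (it computes their
  \<open>(x + 1)\<close>-adic expansion), so \<open>m\<close> is dominated by a binomial variable; moreover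
  \<open>[S\<^sup>n r]\<close> determines the top \<open>m\<close> random coefficients, so given \<open>m\<close> it is dominated by a
  uniform element of \<open>Q\<^sub>m\<close>. Hence \<open>Z\<^sub>n = E exp (- b \<tau>)\<close> satisfies
  \<open>Z\<^sub>n \<le> exp (- b n) \<Sum>\<^sub>m min (C(n, m) / 2\<^sup>n) Z\<^sub>m\<close>. Splitting the sum at \<open>m = (1/2 - d/8) n\<close>
  and using Hoeffding's inequality below that point gives \<open>Z\<^sub>n = O(exp (- (2 - d) b n))\<close>
  for \<open>b = (d/8)\<^sup>2\<close>, and Jensen's inequality turns this into \<open>E \<tau> \<ge> (2 - d) n - O(1)\<close>.
\<close>

lemma coeffx_zero [simp]: "coeffx 0 z = 0"
  by (simp add: coeffx_def)

lemma coeffx_add [simp]: "coeffx (a + b) z = coeffx a z + coeffx b z"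
  by (simp add: coeffx_def)

lemma coeffx_diff [simp]: "coeffx (a - b) z = coeffx a z - coeffx b z"
  by (simp add: coeffx_def)

lemma coeffx_one: "coeffx 1 z = (if z = 0 then 1 else 0)"
  by (simp add: coeffx_def)

lemma coeffx_xx: "coeffx xx z = (if z = 1 then 1 else 0)"
  by (simp add: coeffx_def xx_def)

lemma coeffx_xx_mult: "coeffx (xx * f) z = coeffx f (z - 1)"
  by (simp add: coeffx_def xx_def fls_X_inv_times_conv_shift)

lemma coeffx_eqI: "(\<And>z. coeffx a z = coeffx b z) \<Longrightarrow> a = b"
  unfolding coeffx_def by (rule fls_eqI) (metis minus_minus)

lemma coeffx_above_degx: "degx r < z \<Longrightarrow> coeffx r z = 0"
  by (simp add: coeffx_def degx_def)

lemma coeffx_degx: "r \<noteq> 0 \<Longrightarrow> coeffx r (degx r) = 1"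
  unfolding coeffx_def degx_def by (metis bit_not_zero_iff minus_minus nth_fls_subdegree_nonzero)

lemma degx_geI: "coeffx r z \<noteq> 0 \<Longrightarrow> z \<le> degx r"
  unfolding coeffx_def degx_def using fls_subdegree_leI[of r "- z"] by simp

lemma degx_eqI: "coeffx r z \<noteq> 0 \<Longrightarrow> (\<And>w. z < w \<Longrightarrow> coeffx r w = 0) \<Longrightarrow> degx r = z"
  by (metis coeffx_degx degx_geI order.order_iff_strict one_neq_zero coeffx_zero)

lemma coeffx_vanish_iff: "(\<forall>z\<ge>a. coeffx g z = 0) \<longleftrightarrow> g = 0 \<or> degx g < a"
  by (metis coeffx_above_degx coeffx_degx coeffx_zero le_less_trans linorder_not_le one_neq_zero)

lemma degx_mult: "a \<noteq> 0 \<Longrightarrow> b \<noteq> 0 \<Longrightarrow> degx (a * b) = degx a + degx b"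
  by (simp add: degx_def)

lemma degx_divide: "a \<noteq> 0 \<Longrightarrow> b \<noteq> 0 \<Longrightarrow> degx (a / b) = degx a - degx b"
  by (simp add: degx_def fls_divide_subdegree)

lemma degx_power: "degx (a ^ k) = int k * degx a"
  by (simp add: degx_def fls_subdegree_pow)

lemma xx_nonzero [simp]: "xx \<noteq> 0"
  by (simp add: xx_def)

lemma degx_xx [simp]: "degx xx = 1"
  by (simp add: degx_def xx_def)

lemma xx_plus_1_nonzero [simp]: "xx + 1 \<noteq> 0"
  by (metis coeffx_add coeffx_one coeffx_xx coeffx_zero add_0 zero_neq_one)

lemma degx_xx_plus_1 [simp]: "degx (xx + 1) = 1"
  by (rule degx_eqI) (auto simp: coeffx_xx coeffx_one)

lemma degx_below_divide_xx_plus_1: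
  "g = 0 \<or> degx g < a \<Longrightarrow> g / (xx + 1) = 0 \<or> degx (g / (xx + 1)) < a - 1"
  by (cases "g = 0") (auto simp: degx_divide)

section \<open>The polynomial part and the reduction of \<open>S\<close> to polynomials\<close>

definition fls_of_poly :: "bit poly \<Rightarrow> bit fls" where
  "fls_of_poly p = Abs_fls (\<lambda>m. if m \<le> 0 then coeff p (nat (- m)) else 0)"

lemma coeffx_fls_of_poly: "coeffx (fls_of_poly p) z = (if 0 \<le> z then coeff p (nat z) else 0)"
proof -
  have "\<forall>\<^sub>\<infinity>n. (\<lambda>m. if m \<le> 0 then coeff p (nat (- m)) else 0) (- int n) = 0"
    using MOST_coeff_eq_0[of p] by simp
  thus ?thesis unfolding fls_of_poly_def coeffx_def by simp
qed

lemma fls_of_poly_add: "fls_of_poly (p + q) = fls_of_poly p + fls_of_poly q"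
  by (rule coeffx_eqI) (simp add: coeffx_fls_of_poly)

lemma fls_of_poly_one: "fls_of_poly 1 = 1"
  by (rule coeffx_eqI) (auto simp: coeffx_fls_of_poly coeffx_one coeff_1 nat_eq_iff)

lemma fls_of_poly_pCons_0: "fls_of_poly (pCons 0 p) = xx * fls_of_poly p"
proof (rule coeffx_eqI)
  fix z :: int
  show "coeffx (fls_of_poly (pCons 0 p)) z = coeffx (xx * fls_of_poly p) z"
  proof (cases "z \<ge> 1")
    case True
    hence "nat z = Suc (nat (z - 1))" by linarith
    with True show ?thesis by (simp add: coeffx_xx_mult coeffx_fls_of_poly)
  qed (cases "z = 0"; simp add: coeffx_xx_mult coeffx_fls_of_poly)
qed

definition x_plus_1 :: "bit poly" where
  "x_plus_1 = [:1, 1:]"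

lemma x_plus_1_nonzero [simp]: "x_plus_1 \<noteq> 0"
  by (simp add: x_plus_1_def)

lemma degree_x_plus_1 [simp]: "degree x_plus_1 = 1"
  by (simp add: x_plus_1_def)

lemma x_plus_1_dvd_iff: "x_plus_1 dvd p \<longleftrightarrow> poly p 1 = 0"
  using poly_eq_0_iff_dvd[of p 1] by (simp add: x_plus_1_def)

lemma fls_of_poly_x_plus_1_mult: "fls_of_poly (x_plus_1 * q) = (xx + 1) * fls_of_poly q"
proof -
  have "x_plus_1 * q = q + pCons 0 q" by (simp add: x_plus_1_def)
  thus ?thesis by (simp add: fls_of_poly_add fls_of_poly_pCons_0 algebra_simps)
qed

lemma coeff_polypart: "coeff (polypart r) i = coeffx r (int i)"
  by (cases "i < nat (degx r) + 1")
    (auto simp: polypart_def nth_default_def coeffx_above_degx simp del: upt_Suc)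

lemma polypart_add: "polypart (a + b) = polypart a + polypart b"
  by (rule poly_eqI) (simp add: coeff_polypart)

lemma polypart_eq_0_iff: "polypart g = 0 \<longleftrightarrow> g = 0 \<or> degx g < 0"
proof -
  have "polypart g = 0 \<longleftrightarrow> (\<forall>i. coeffx g (int i) = 0)"
    by (metis coeff_polypart coeff_0 leading_coeff_0_iff)
  also have "\<dots> \<longleftrightarrow> (\<forall>z\<ge>0. coeffx g z = 0)"
    by (metis nonneg_int_cases of_nat_0_le_iff)
  finally show ?thesis by (simp add: coeffx_vanish_iff)
qed

lemma polypart_fls_of_poly_add:
  "g = 0 \<or> degx g < 0 \<Longrightarrow> polypart (fls_of_poly p + g) = p"
proof -
  assume "g = 0 \<or> degx g < 0"
  hence "polypart g = 0" by (simp add: polypart_eq_0_iff)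
  moreover have "polypart (fls_of_poly p) = p"
    by (rule poly_eqI) (simp add: coeff_polypart coeffx_fls_of_poly)
  ultimately show ?thesis by (simp add: polypart_add)
qed

text \<open>The action of \<open>S\<close> on polynomial parts; both divisions are exact.\<close>

definition S_poly :: "bit poly \<Rightarrow> bit poly" where
  "S_poly p = (if poly p 1 = 0 then p div x_plus_1 else ([:0, 1:] * p + 1) div x_plus_1)"

definition tau_poly :: "bit poly \<Rightarrow> nat" where
  "tau_poly p = (LEAST k. (S_poly ^^ k) p = 1)"

lemma S_poly_even: "poly p 1 = 0 \<Longrightarrow> p = x_plus_1 * S_poly p"
  by (simp add: S_poly_def x_plus_1_dvd_iff[symmetric])

lemma S_poly_odd:
  assumes "poly p 1 = 1"
  shows "[:0, 1:] * p + 1 = x_plus_1 * S_poly p"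
proof -
  have "x_plus_1 dvd [:0, 1:] * p + 1"
    using assms by (simp add: x_plus_1_dvd_iff)
  moreover have "S_poly p = ([:0, 1:] * p + 1) div x_plus_1"
    using assms by (simp add: S_poly_def)
  ultimately show ?thesis by simp
qed

text \<open>Splitting \<open>r = [r] + f\<close> with \<open>f\<close> of negative degree, \<open>S\<close> maps \<open>[r]\<close> to \<open>S_poly [r]\<close>
  exactly and \<open>f\<close> to a series of negative degree again.\<close>

lemma polypart_S: "polypart (S r) = S_poly (polypart r)"
proof -
  define p where "p = polypart r"
  define f where "f = r - fls_of_poly p"
  have r_eq: "r = fls_of_poly p + f"
    by (simp add: f_def)
  have "\<forall>z\<ge>0. coeffx f z = 0"
    by (auto simp: f_def p_def coeffx_fls_of_poly coeff_polypart)
  hence f_neg: "f = 0 \<or> degx f < 0"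
    by (simp add: coeffx_vanish_iff)
  show ?thesis
  proof (cases "poly p 1 = 0")
    case True
    have r_split: "r = (xx + 1) * fls_of_poly (S_poly p) + f"
      using r_eq S_poly_even[OF True] fls_of_poly_x_plus_1_mult by metis
    have "S r = r / (xx + 1)"
      using True by (simp add: S_def p_def)
    also have "\<dots> = fls_of_poly (S_poly p) + f / (xx + 1)"
      by (subst r_split) (simp add: add_divide_distrib)
    finally have "S r = fls_of_poly (S_poly p) + f / (xx + 1)" .
    moreover have "f / (xx + 1) = 0 \<or> degx (f / (xx + 1)) < 0"
      using degx_below_divide_xx_plus_1[OF f_neg] by auto
    ultimately show ?thesis
      by (simp add: polypart_fls_of_poly_add p_def)
  next
    case False
    hence odd: "poly p 1 = 1" by simp
    have "xx * r = (xx + 1) * fls_of_poly (S_poly p) + (xx * f - 1)"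
      using arg_cong[OF S_poly_odd[OF odd], of fls_of_poly] r_eq
      by (simp add: fls_of_poly_add fls_of_poly_one fls_of_poly_pCons_0
          fls_of_poly_x_plus_1_mult algebra_simps)
    hence "S r = fls_of_poly (S_poly p) + (xx * f - 1) / (xx + 1)"
      using False by (simp add: S_def p_def add_divide_distrib)
    moreover have "xx * f - 1 = 0 \<or> degx (xx * f - 1) < 1"
      using f_neg unfolding coeffx_vanish_iff[symmetric]
      by (auto simp: coeffx_xx_mult coeffx_one)
    hence "(xx * f - 1) / (xx + 1) = 0 \<or> degx ((xx * f - 1) / (xx + 1)) < 0"
      using degx_below_divide_xx_plus_1 by fastforce
    ultimately show ?thesis
      by (simp add: polypart_fls_of_poly_add p_def)
  qed
qed

lemma polypart_S_pow: "polypart ((S ^^ k) r) = (S_poly ^^ k) (polypart r)"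
  by (induction k) (simp_all add: polypart_S)

lemma tau_eq_tau_poly: "tau r = tau_poly (polypart r)"
  by (simp add: tau_def tau_poly_def polypart_S_pow)

lemma S_poly_nonzero: "p \<noteq> 0 \<Longrightarrow> S_poly p \<noteq> 0"
proof (cases "poly p 1 = 0")
  case False
  hence "[:0, 1:] * p + 1 = x_plus_1 * S_poly p" by (intro S_poly_odd) simp
  moreover have "poly ([:0, 1:] * p + 1) 0 \<noteq> 0" by simp
  ultimately show ?thesis by auto
qed (metis S_poly_even mult_zero_right)

lemma S_poly_pow_nonzero: "p \<noteq> 0 \<Longrightarrow> (S_poly ^^ k) p \<noteq> 0"
  by (induction k) (simp_all add: S_poly_nonzero)

lemma degree_S_poly:
  assumes "p \<noteq> 0"
  shows "degree (S_poly p) = (if poly p 1 = 0 then degree p - 1 else degree p)"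
proof (cases "poly p 1 = 0")
  case True
  have "degree p = 1 + degree (S_poly p)"
    by (subst S_poly_even[OF True]) (simp add: degree_mult_eq S_poly_nonzero assms)
  thus ?thesis using True by simp
next
  case False
  hence odd: "poly p 1 = 1" by simp
  have "degree ([:0, 1:] * p + 1) = Suc (degree p)"
    using assms by (simp add: degree_add_eq_left degree_mult_eq)
  moreover have "degree ([:0, 1:] * p + 1) = 1 + degree (S_poly p)"
    by (subst S_poly_odd[OF odd]) (simp add: degree_mult_eq S_poly_nonzero assms)
  ultimately show ?thesis using False by simp
qed

lemma degree_S_poly_pow_le: "p \<noteq> 0 \<Longrightarrow> degree ((S_poly ^^ k) p) \<le> degree p"
  by (induction k) (auto simp: degree_S_poly S_poly_pow_nonzero intro: le_trans)

lemma degree_le_degree_S_poly_pow: "p \<noteq> 0 \<Longrightarrow> degree p \<le> degree ((S_poly ^^ k) p) + k"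
  by (induction k) (auto simp: degree_S_poly S_poly_pow_nonzero)

lemma degree_S_poly_pow:
  assumes "p \<noteq> 0" "k \<le> degree p"
  shows "degree ((S_poly ^^ k) p) + k = degree p + card {i. i < k \<and> poly ((S_poly ^^ i) p) 1 = 1}"
  using assms(2)
proof (induction k)
  case (Suc k)
  let ?odd = "\<lambda>i. poly ((S_poly ^^ i) p) 1 = 1"
  have "{i. i < Suc k \<and> ?odd i} = {i. i < k \<and> ?odd i} \<union> (if ?odd k then {k} else {})"
    by (auto simp: less_Suc_eq)
  hence "card {i. i < Suc k \<and> ?odd i} = card {i. i < k \<and> ?odd i} + (if ?odd k then 1 else 0)"
    by (auto simp: card_insert_if)
  moreover have "1 \<le> degree ((S_poly ^^ k) p)"
    using degree_le_degree_S_poly_pow[OF assms(1), of k] Suc.prems by linarith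
  ultimately show ?case
    using Suc degree_S_poly[OF S_poly_pow_nonzero[OF assms(1)], of k] by auto
qed simp

lemma S_poly_odd_plus_1:
  assumes "poly p 1 = 1"
  shows "x_plus_1 * (S_poly p + 1) = [:0, 1:] * (p + 1)"
proof -
  have "x_plus_1 * (S_poly p + 1) = [:0, 1:] * p + 1 + [:1, 1:]"
    using S_poly_odd[OF assms] by (simp add: distrib_left x_plus_1_def)
  also have "\<dots> = [:0, 1:] * (p + 1)"
    by (simp add: one_pCons)
  finally show ?thesis .
qed

lemma bit_poly_uminus [simp]: "- (p :: bit poly) = p"
  by (rule poly_eqI) simp

lemma bit_poly_plus_1_eq_0_iff: "(p :: bit poly) + 1 = 0 \<longleftrightarrow> p = 1"
  by (metis add_eq_0_iff bit_poly_uminus)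

lemma x_plus_1_power_dvd_iff: "x_plus_1 ^ k dvd p \<longleftrightarrow> p = 0 \<or> k \<le> order 1 p"
  using order_divides[of "1 :: bit" k p] by (simp add: x_plus_1_def)

lemma order_1_x_plus_1: "order 1 x_plus_1 = 1"
  using order_power_n_n[of "1 :: bit" 1] by (simp add: x_plus_1_def)

lemma order_1_pCons_0: "order 1 (pCons 0 q) = order 1 (q :: bit poly)"
proof (cases "q = 0")
  case False
  hence "order 1 ([:0, 1:] * q) = order 1 ([:0, 1:] :: bit poly) + order 1 q"
    by (intro order_mult) simp
  moreover have "order 1 ([:0, 1:] :: bit poly) = 0"
    by (rule order_0I) simp
  ultimately show ?thesis by simp
qed simp

text \<open>Termination: odd steps keep the degree and remove a factor \<open>x + 1\<close> from \<open>p + 1\<close>, even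
  steps lower the degree. Since \<open>order 1 (p + 1) \<le> degree p\<close>, the following measure decreases.\<close>

lemma S_poly_reaches_one: "p \<noteq> 0 \<Longrightarrow> \<exists>k. (S_poly ^^ k) p = 1"
proof (induction "degree p * Suc (degree p) + order 1 (p + 1)" arbitrary: p rule: less_induct)
  case less
  consider "p = 1" | "S_poly p = 1" | "p \<noteq> 1" "S_poly p \<noteq> 1" by blast
  thus ?case
  proof cases
    case 1
    thus ?thesis by (intro exI[of _ 0]) simp
  next
    case 2
    thus ?thesis by (intro exI[of _ 1]) simp
  next
    case 3
    have Sp1: "S_poly p + 1 \<noteq> 0" "p + 1 \<noteq> 0"
      using 3 by (simp_all add: bit_poly_plus_1_eq_0_iff)
    have "degree (S_poly p) * Suc (degree (S_poly p)) + order 1 (S_poly p + 1)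
          < degree p * Suc (degree p) + order 1 (p + 1)"
    proof (cases "poly p 1 = 0")
      case True
      have "1 \<le> degree p"
        using dvd_imp_degree_le[of x_plus_1 p] True less.prems by (simp add: x_plus_1_dvd_iff)
      moreover have "order 1 (S_poly p + 1) \<le> degree (S_poly p)"
        using order_degree[OF Sp1(1), of 1] degree_add_le_max[of "S_poly p" 1] by simp
      ultimately show ?thesis
        using True by (cases "degree p") (auto simp: degree_S_poly less.prems)
    next
      case False
      hence "poly p 1 = 1" by simp
      hence "order 1 (x_plus_1 * (S_poly p + 1)) = order 1 (p + 1)"
        by (simp add: S_poly_odd_plus_1 order_1_pCons_0)
      moreover have "order 1 (x_plus_1 * (S_poly p + 1)) = 1 + order 1 (S_poly p + 1)"
        using Sp1 by (simp add: order_mult order_1_x_plus_1)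
      ultimately have "1 + order 1 (S_poly p + 1) = order 1 (p + 1)"
        by simp
      thus ?thesis using False by (simp add: degree_S_poly less.prems)
    qed
    then obtain k where "(S_poly ^^ k) (S_poly p) = 1"
      using less.hyps S_poly_nonzero[OF less.prems] by blast
    hence "(S_poly ^^ Suc k) p = 1" by (simp add: funpow_Suc_right del: funpow.simps)
    thus ?thesis by blast
  qed
qed

lemma tau_poly_S_poly:
  assumes "p \<noteq> 0" "p \<noteq> 1"
  shows "tau_poly p = Suc (tau_poly (S_poly p))"
proof -
  obtain k where "(S_poly ^^ k) p = 1"
    using S_poly_reaches_one[OF assms(1)] by blast
  thus ?thesis
    unfolding tau_poly_def using assms(2)
    by (subst Least_Suc[where n = k]) (simp_all add: funpow_Suc_right del: funpow.simps)
qed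

lemma tau_poly_shift:
  "p \<noteq> 0 \<Longrightarrow> k \<le> degree p \<Longrightarrow> tau_poly p = k + tau_poly ((S_poly ^^ k) p)"
proof (induction k)
  case (Suc k)
  let ?q = "(S_poly ^^ k) p"
  have "1 \<le> degree ?q"
    using degree_le_degree_S_poly_pow[OF Suc.prems(1), of k] Suc.prems(2) by linarith
  hence "?q \<noteq> 1" by auto
  thus ?case
    using Suc S_poly_pow_nonzero[OF Suc.prems(1), of k] by (simp add: tau_poly_S_poly)
qed simp

section \<open>Coefficient vectors and their parity sequences\<close>

definition bit_vectors :: "nat \<Rightarrow> (nat \<Rightarrow> bit) set" where
  "bit_vectors n = PiE {..<n} (\<lambda>_. UNIV)"

lemma UNIV_bit: "(UNIV :: bit set) = {0, 1}"
  by (auto simp: bit_not_zero_iff)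

lemma finite_UNIV_bit [simp]: "finite (UNIV :: bit set)"
  by (simp add: UNIV_bit)

lemma card_UNIV_bit: "card (UNIV :: bit set) = 2"
  by (simp add: UNIV_bit)

lemma finite_bit_vectors [simp]: "finite (bit_vectors n)"
  by (simp add: bit_vectors_def finite_PiE)

lemma card_bit_vectors: "card (bit_vectors n) = 2 ^ n"
  by (simp add: bit_vectors_def card_PiE card_UNIV_bit)

lemma bit_vectors_eqI:
  "c \<in> bit_vectors n \<Longrightarrow> c' \<in> bit_vectors n \<Longrightarrow> (\<And>i. i < n \<Longrightarrow> c i = c' i) \<Longrightarrow> c = c'"
  unfolding bit_vectors_def by (rule PiE_ext) auto

lemma coeffx_r_of:
  "coeffx (r_of n c) z = (if z > int n then 0 else if z = int n then 1 else c (nat (int n - z) - 1))"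
proof -
  have "\<forall>\<^sub>\<infinity>k. (\<lambda>m. if m < - int n then 0 else if m = - int n then 1
                     else c (nat (m + int n) - 1)) (- int k) = 0"
    by (rule MOST_nat[THEN iffD2]) (rule exI[of _ n], auto)
  thus ?thesis unfolding r_of_def coeffx_def by (auto simp: algebra_simps)
qed

lemma coeffx_r_of_below: "coeffx (r_of n c) (int n - 1 - int i) = c i"
proof -
  have "nat (int n - (int n - 1 - int i)) - 1 = i"
    by simp
  thus ?thesis by (simp add: coeffx_r_of)
qed

lemma inj_r_of: "inj (r_of n)"
proof (rule injI)
  fix c c' assume "r_of n c = r_of n c'"
  thus "c = c'"
    by (metis coeffx_r_of_below ext)
qed

lemma r_of_nonzero: "r_of n c \<noteq> 0"
  using coeffx_r_of[of n c n] by auto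

lemma degx_r_of: "degx (r_of n c) = int n"
  by (rule degx_eqI) (auto simp: coeffx_r_of)

definition poly_of_bits :: "nat \<Rightarrow> (nat \<Rightarrow> bit) \<Rightarrow> bit poly" where
  "poly_of_bits n c = polypart (r_of n c)"

lemma coeff_poly_of_bits:
  "coeff (poly_of_bits n c) i = (if i > n then 0 else if i = n then 1 else c (n - 1 - i))"
  by (auto simp: poly_of_bits_def coeff_polypart coeffx_r_of nat_diff_distrib)

lemma coeff_poly_of_bits_below: "i < n \<Longrightarrow> coeff (poly_of_bits n c) (n - 1 - i) = c i"
  by (auto simp: coeff_poly_of_bits)

lemma poly_of_bits_nonzero: "poly_of_bits n c \<noteq> 0"
  using coeff_poly_of_bits[of n c n] by auto

lemma degree_poly_of_bits: "degree (poly_of_bits n c) = n"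
  by (rule antisym) (auto intro: degree_le le_degree simp: coeff_poly_of_bits)

lemma poly_of_bits_cong: "(\<And>i. i < n \<Longrightarrow> c i = c' i) \<Longrightarrow> poly_of_bits n c = poly_of_bits n c'"
  by (rule poly_eqI) (simp add: coeff_poly_of_bits)

lemma tau_r_of: "tau (r_of n c) = tau_poly (poly_of_bits n c)"
  by (simp add: tau_eq_tau_poly poly_of_bits_def)

definition bits_of_poly :: "nat \<Rightarrow> bit poly \<Rightarrow> (nat \<Rightarrow> bit)" where
  "bits_of_poly m h = (\<lambda>i\<in>{..<m}. coeff h (m - 1 - i))"

lemma bits_of_poly_in_bit_vectors: "bits_of_poly m h \<in> bit_vectors m"
  by (simp add: bits_of_poly_def bit_vectors_def)

lemma poly_of_bits_bits_of_poly:
  assumes "h \<noteq> 0" "degree h = m"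
  shows "poly_of_bits m (bits_of_poly m h) = h"
proof (rule poly_eqI)
  fix i
  have "coeff h m = 1"
    using assms by (metis bit_not_zero_iff leading_coeff_0_iff)
  thus "coeff (poly_of_bits m (bits_of_poly m h)) i = coeff h i"
    using assms(2) by (auto simp: coeff_poly_of_bits bits_of_poly_def coeff_eq_0)
qed

text \<open>Agreement of the first \<open>k\<close> parities is agreement modulo \<open>(x + 1)\<^sup>k\<close>: the orbit of \<open>p\<close>
  under \<open>S_poly\<close> computes the \<open>(x + 1)\<close>-adic expansion of \<open>p\<close>.\<close>

lemma x_plus_1_power_dvd_diff:
  "(\<forall>i<k. poly ((S_poly ^^ i) p) 1 = poly ((S_poly ^^ i) q) 1) \<Longrightarrow> x_plus_1 ^ k dvd p - q"
proof (induction k arbitrary: p q)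
  case (Suc k)
  have "\<forall>i<k. poly ((S_poly ^^ i) (S_poly p)) 1 = poly ((S_poly ^^ i) (S_poly q)) 1"
    using Suc.prems by (auto simp: funpow_Suc_right simp del: funpow.simps)
  hence IH: "x_plus_1 ^ k dvd S_poly p - S_poly q"
    by (rule Suc.IH)
  have parity: "poly p 1 = poly q 1"
    using Suc.prems by (metis funpow_0 zero_less_Suc)
  show ?case
  proof (cases "poly p 1 = 0")
    case True
    hence "p - q = x_plus_1 * (S_poly p - S_poly q)"
      using S_poly_even[of p] S_poly_even[of q] parity by (simp add: right_diff_distrib)
    thus ?thesis using IH by simp
  next
    case False
    hence "poly p 1 = 1" "poly q 1 = 1"
      using parity by simp_all
    hence "x_plus_1 * (S_poly p - S_poly q) = ([:0, 1:] * p + 1) - ([:0, 1:] * q + 1)"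
      by (simp only: S_poly_odd right_diff_distrib)
    also have "\<dots> = [:0, 1:] * (p - q)"
      by (simp add: algebra_simps)
    finally have "[:0, 1:] * (p - q) = x_plus_1 * (S_poly p - S_poly q)" ..
    hence "x_plus_1 ^ Suc k dvd [:0, 1:] * (p - q)"
      using IH by simp
    thus ?thesis
      by (simp add: x_plus_1_power_dvd_iff order_1_pCons_0 del: power_Suc)
  qed
qed simp

definition parity_vector :: "nat \<Rightarrow> (nat \<Rightarrow> bit) \<Rightarrow> (nat \<Rightarrow> bit)" where
  "parity_vector n c = (\<lambda>i\<in>{..<n}. poly ((S_poly ^^ i) (poly_of_bits n c)) 1)"

lemma parity_vector_in_bit_vectors: "parity_vector n c \<in> bit_vectors n"
  by (simp add: parity_vector_def bit_vectors_def)

lemma inj_on_parity_vector: "inj_on (parity_vector n) (bit_vectors n)"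
proof (rule inj_onI)
  fix c c' assume c: "c \<in> bit_vectors n" "c' \<in> bit_vectors n"
    and eq: "parity_vector n c = parity_vector n c'"
  let ?d = "poly_of_bits n c - poly_of_bits n c'"
  have dvd: "x_plus_1 ^ n dvd ?d"
    using eq by (intro x_plus_1_power_dvd_diff) (metis parity_vector_def restrict_apply' lessThan_iff)
  have small: "?d = 0 \<or> degree ?d < n"
    by (cases n) (auto intro!: degree_le intro: poly_of_bits_cong simp: coeff_poly_of_bits less_Suc_eq_le)
  have "?d = 0"
  proof (rule ccontr)
    assume "?d \<noteq> 0"
    with dvd have "degree (x_plus_1 ^ n) \<le> degree ?d"
      by (rule dvd_imp_degree_le)
    with small \<open>?d \<noteq> 0\<close> show False
      by (simp add: degree_power_eq)
  qed
  hence "c i = c' i" if "i < n" for i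
    using coeff_poly_of_bits_below[OF that, of c] coeff_poly_of_bits_below[OF that, of c'] by simp
  thus "c = c'"
    using bit_vectors_eqI[OF c] by blast
qed

lemma degree_S_poly_pow_poly_of_bits:
  "degree ((S_poly ^^ n) (poly_of_bits n c)) = card {i. i < n \<and> parity_vector n c i = 1}"
proof -
  have "{i. i < n \<and> parity_vector n c i = 1} = {i. i < n \<and> poly ((S_poly ^^ i) (poly_of_bits n c)) 1 = 1}"
    by (auto simp: parity_vector_def)
  thus ?thesis
    using degree_S_poly_pow[OF poly_of_bits_nonzero, of n n c] by (simp add: degree_poly_of_bits)
qed

lemma card_bit_vectors_with_ones_le:
  "card {v \<in> bit_vectors n. card {i. i < n \<and> v i = 1} = m} \<le> n choose m"
proof -
  let ?ones = "\<lambda>v. {i. i < n \<and> v i = (1 :: bit)}"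
  have "inj_on ?ones (bit_vectors n)"
  proof (rule inj_onI)
    fix v w assume v_w: "v \<in> bit_vectors n" "w \<in> bit_vectors n" and ones: "?ones v = ?ones w"
    have "v i = w i" if "i < n" for i
    proof -
      have "(v i = 1) = (w i = 1)"
        using ones that by blast
      thus ?thesis by (metis bit_not_one_iff)
    qed
    thus "v = w"
      using bit_vectors_eqI[OF v_w] by blast
  qed
  hence "card {v \<in> bit_vectors n. card (?ones v) = m} = card (?ones ` {v \<in> bit_vectors n. card (?ones v) = m})"
    by (rule card_image[symmetric, OF inj_on_subset]) auto
  also have "\<dots> \<le> card {B. B \<subseteq> {..<n} \<and> card B = m}"
    by (rule card_mono) auto
  also have "\<dots> = n choose m"
    by (simp add: n_subsets)
  finally show ?thesis .
qed

lemma card_degree_S_poly_pow_le_binomial: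
  "card {c \<in> bit_vectors n. degree ((S_poly ^^ n) (poly_of_bits n c)) = m} \<le> n choose m"
proof -
  let ?A = "{c \<in> bit_vectors n. degree ((S_poly ^^ n) (poly_of_bits n c)) = m}"
  have "card ?A = card (parity_vector n ` ?A)"
    by (intro card_image[symmetric] inj_on_subset[OF inj_on_parity_vector]) auto
  also have "\<dots> \<le> card {v \<in> bit_vectors n. card {i. i < n \<and> v i = 1} = m}"
    by (rule card_mono) (auto simp: parity_vector_in_bit_vectors degree_S_poly_pow_poly_of_bits)
  also have "\<dots> \<le> n choose m"
    by (rule card_bit_vectors_with_ones_le)
  finally show ?thesis .
qed

section \<open>What the image under \<open>S\<^sup>n\<close> remembers of the coefficients\<close>

lemma polypart_diff: "polypart (a - b) = polypart a - polypart b"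
  by (rule poly_eqI) (simp add: coeff_polypart)

lemma degx_polypart: "polypart s \<noteq> 0 \<Longrightarrow> degx s = int (degree (polypart s))"
proof -
  assume nz: "polypart s \<noteq> 0"
  hence "s \<noteq> 0" "0 \<le> degx s" by (auto simp: polypart_eq_0_iff)
  hence "coeff (polypart s) (nat (degx s)) \<noteq> 0"
    by (simp add: coeff_polypart coeffx_degx)
  moreover have "coeff (polypart s) i = 0" if "nat (degx s) < i" for i
    using that by (simp add: coeff_polypart coeffx_above_degx)
  ultimately have "degree (polypart s) = nat (degx s)"
    by (meson antisym degree_le le_degree leI)
  thus ?thesis using \<open>0 \<le> degx s\<close> by simp
qed

lemma S_pow_eq: "\<exists>j\<le>k. (S ^^ k) r = xx ^ j * r / (xx + 1) ^ k"
proof (induction k)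
  case (Suc k)
  then obtain j where j: "j \<le> k" "(S ^^ k) r = xx ^ j * r / (xx + 1) ^ k" by blast
  hence step: "(S ^^ Suc k) r = S (xx ^ j * r / (xx + 1) ^ k)" by simp
  show ?case
  proof (cases "poly (polypart (xx ^ j * r / (xx + 1) ^ k)) 1 = 0")
    case True
    hence "(S ^^ Suc k) r = xx ^ j * r / (xx + 1) ^ Suc k"
      unfolding step S_def by (simp add: ac_simps)
    with j(1) show ?thesis
      by (intro exI[of _ j]) simp
  next
    case False
    hence "(S ^^ Suc k) r = xx ^ Suc j * r / (xx + 1) ^ Suc k"
      unfolding step S_def by (simp add: ac_simps)
    with j(1) show ?thesis
      by (intro exI[of _ "Suc j"]) simp
  qed
qed simp

text \<open>As \<open>S\<^sup>k r = x\<^sup>j r / (x + 1)\<^sup>k\<close> for some \<open>j\<close>, and \<open>j\<close> is read off from the degree of the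
  result, two series of degree \<open>k\<close> with the same \<open>[S\<^sup>k r] \<noteq> 0\<close> satisfy
  \<open>S\<^sup>k r - S\<^sup>k r' = x\<^sup>j (r - r') / (x + 1)\<^sup>k\<close>, which has negative degree.\<close>

lemma S_pow_polypart_eq_imp_degx_diff:
  assumes "r \<in> Q k" "r' \<in> Q k"
    and eq: "polypart ((S ^^ k) r) = polypart ((S ^^ k) r')"
    and nz: "polypart ((S ^^ k) r) \<noteq> 0"
  shows "r = r' \<or> degx (r - r') < int k - int (degree (polypart ((S ^^ k) r)))"
proof -
  define m where "m = degree (polypart ((S ^^ k) r))"
  have S_pow: "(S ^^ k) s = xx ^ m * s / (xx + 1) ^ k"
    if s: "s \<in> Q k" "polypart ((S ^^ k) s) = polypart ((S ^^ k) r)" for s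
  proof -
    obtain j where j: "(S ^^ k) s = xx ^ j * s / (xx + 1) ^ k"
      using S_pow_eq by blast
    have "int m = degx ((S ^^ k) s)"
      using degx_polypart[of "(S ^^ k) s"] s(2) nz by (simp add: m_def)
    also have "\<dots> = int j"
      using j s(1) by (simp add: Q_def degx_divide degx_mult degx_power)
    finally show ?thesis using j by simp
  qed
  have "(S ^^ k) r - (S ^^ k) r' = xx ^ m * (r - r') / (xx + 1) ^ k"
    using S_pow[of r] S_pow[of r'] assms by (simp add: diff_divide_distrib right_diff_distrib)
  moreover have "polypart ((S ^^ k) r - (S ^^ k) r') = 0"
    using eq by (simp add: polypart_diff)
  ultimately have "r = r' \<or> degx (xx ^ m * (r - r') / (xx + 1) ^ k) < 0"
    by (simp add: polypart_eq_0_iff)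
  moreover have "degx (xx ^ m * (r - r') / (xx + 1) ^ k) = int m + degx (r - r') - int k"
    if "r \<noteq> r'"
    using that by (simp add: degx_divide degx_mult degx_power)
  ultimately show ?thesis
    unfolding m_def by fastforce
qed

lemma S_poly_pow_determines_leading_bits:
  assumes eq: "(S_poly ^^ n) (poly_of_bits n c) = (S_poly ^^ n) (poly_of_bits n c')"
    and i: "i < degree ((S_poly ^^ n) (poly_of_bits n c))"
  shows "c i = c' i"
proof -
  have "r_of n c \<in> Q n" "r_of n c' \<in> Q n"
    by (simp_all add: Q_def r_of_nonzero degx_r_of)
  moreover have "polypart ((S ^^ n) (r_of n c)) \<noteq> 0"
    using S_poly_pow_nonzero[OF poly_of_bits_nonzero]
    by (simp add: polypart_S_pow poly_of_bits_def)
  ultimately have "r_of n c = r_of n c' \<or> degx (r_of n c - r_of n c') < int n - 1 - int i"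
    using S_pow_polypart_eq_imp_degx_diff[of "r_of n c" n "r_of n c'"] eq i
    by (fastforce simp: polypart_S_pow poly_of_bits_def)
  hence "coeffx (r_of n c - r_of n c') (int n - 1 - int i) = 0"
    by (metis coeffx_above_degx coeffx_zero diff_self)
  hence "coeffx (r_of n c) (int n - 1 - int i) = coeffx (r_of n c') (int n - 1 - int i)"
    by (metis coeffx_diff right_minus_eq)
  thus "c i = c' i"
    by (simp only: coeffx_r_of_below)
qed

lemma card_bit_vectors_prefix_le:
  assumes "m \<le> n"
  shows "card {c \<in> bit_vectors n. \<forall>i<m. c i = c0 i} \<le> 2 ^ (n - m)"
proof -
  let ?A = "{c \<in> bit_vectors n. \<forall>i<m. c i = c0 i}"
  have "inj_on (\<lambda>c. restrict c {m..<n}) ?A"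
  proof (rule inj_onI)
    fix c c' assume c: "c \<in> ?A" "c' \<in> ?A" and eq: "restrict c {m..<n} = restrict c' {m..<n}"
    have "c i = c' i" if "i < n" for i
    proof (cases "i < m")
      case False
      thus ?thesis using that fun_cong[OF eq, of i] by simp
    qed (use c in simp)
    thus "c = c'"
      using c by (intro bit_vectors_eqI[of c n c']) simp_all
  qed
  hence "card ?A \<le> card (PiE {m..<n} (\<lambda>_. UNIV :: bit set))"
    by (rule card_inj_on_le) (auto simp: finite_PiE)
  also have "\<dots> = 2 ^ (n - m)"
    by (simp add: card_PiE card_UNIV_bit)
  finally show ?thesis .
qed

lemma card_S_poly_pow_fiber_le:
  "card {c \<in> bit_vectors n. (S_poly ^^ n) (poly_of_bits n c) = h} \<le> 2 ^ (n - degree h)"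
proof (cases "{c \<in> bit_vectors n. (S_poly ^^ n) (poly_of_bits n c) = h} = {}")
  case False
  then obtain c0 where c0: "c0 \<in> bit_vectors n" "(S_poly ^^ n) (poly_of_bits n c0) = h"
    by blast
  have "degree h \<le> n"
    using degree_S_poly_pow_le[OF poly_of_bits_nonzero, of n n c0] c0(2)
    by (simp add: degree_poly_of_bits)
  have "{c \<in> bit_vectors n. (S_poly ^^ n) (poly_of_bits n c) = h}
      \<subseteq> {c \<in> bit_vectors n. \<forall>i<degree h. c i = c0 i}"
  proof
    fix c assume c: "c \<in> {c \<in> bit_vectors n. (S_poly ^^ n) (poly_of_bits n c) = h}"
    have "c i = c0 i" if "i < degree h" for i
      using S_poly_pow_determines_leading_bits[of n c c0 i] c0(2) c that by simp
    thus "c \<in> {c \<in> bit_vectors n. \<forall>i<degree h. c i = c0 i}"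
      using c by simp
  qed
  hence "card {c \<in> bit_vectors n. (S_poly ^^ n) (poly_of_bits n c) = h}
      \<le> card {c \<in> bit_vectors n. \<forall>i<degree h. c i = c0 i}"
    by (rule card_mono[rotated]) simp
  also have "\<dots> \<le> 2 ^ (n - degree h)"
    by (rule card_bit_vectors_prefix_le) fact
  finally show ?thesis .
qed (metis card.empty zero_le)

lemma poly_of_bits_bits_of_S_poly_pow:
  "degree ((S_poly ^^ n) (poly_of_bits n c)) = m
    \<Longrightarrow> poly_of_bits m (bits_of_poly m ((S_poly ^^ n) (poly_of_bits n c))) = (S_poly ^^ n) (poly_of_bits n c)"
  by (rule poly_of_bits_bits_of_poly[OF S_poly_pow_nonzero[OF poly_of_bits_nonzero]])

lemma sum_S_poly_pow_degree_le:
  fixes f :: "bit poly \<Rightarrow> real" and n m :: nat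
  assumes "\<And>h. 0 \<le> f h"
  defines "H \<equiv> \<lambda>c. (S_poly ^^ n) (poly_of_bits n c)"
  shows "(\<Sum>c | c \<in> bit_vectors n \<and> degree (H c) = m. f (H c))
    \<le> 2 ^ (n - m) * (\<Sum>y\<in>bit_vectors m. f (poly_of_bits m y))"
proof -
  let ?A = "{c. c \<in> bit_vectors n \<and> degree (H c) = m}"
  let ?fiber = "\<lambda>y. {c \<in> ?A. bits_of_poly m (H c) = y}"
  have "finite ?A"
    by (rule finite_subset[of _ "bit_vectors n"]) auto
  moreover have "(\<lambda>c. bits_of_poly m (H c)) ` ?A \<subseteq> bit_vectors m"
    using bits_of_poly_in_bit_vectors by blast
  ultimately have "(\<Sum>c\<in>?A. f (H c)) = (\<Sum>y\<in>bit_vectors m. \<Sum>c\<in>?fiber y. f (H c))"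
    by (intro sum.group[symmetric]) simp_all
  also have "\<dots> \<le> (\<Sum>y\<in>bit_vectors m. 2 ^ (n - m) * f (poly_of_bits m y))"
  proof (rule sum_mono)
    fix y
    have H_eq: "H c = poly_of_bits m y" if "c \<in> ?fiber y" for c
      using that poly_of_bits_bits_of_S_poly_pow[of n c m] by (simp add: H_def)
    have "(\<Sum>c\<in>?fiber y. f (H c)) = (\<Sum>c\<in>?fiber y. f (poly_of_bits m y))"
      by (rule sum.cong[OF refl]) (rule arg_cong[of _ _ f], rule H_eq)
    hence "(\<Sum>c\<in>?fiber y. f (H c)) = card (?fiber y) * f (poly_of_bits m y)"
      by simp
    moreover have "?fiber y \<subseteq> {c \<in> bit_vectors n. H c = poly_of_bits m y}"
      using H_eq by blast
    hence "card (?fiber y) \<le> card {c \<in> bit_vectors n. H c = poly_of_bits m y}"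
      by (rule card_mono[rotated]) simp
    hence "card (?fiber y) \<le> (2 :: nat) ^ (n - m)"
      using card_S_poly_pow_fiber_le[of n "poly_of_bits m y"]
      by (simp add: H_def degree_poly_of_bits)
    hence "real (card (?fiber y)) \<le> 2 ^ (n - m)"
      using of_nat_le_iff[where 'a = real, THEN iffD2] by fastforce
    ultimately show "(\<Sum>c\<in>?fiber y. f (H c)) \<le> 2 ^ (n - m) * f (poly_of_bits m y)"
      using assms(1) by (simp add: mult_right_mono)
  qed
  also have "\<dots> = 2 ^ (n - m) * (\<Sum>y\<in>bit_vectors m. f (poly_of_bits m y))"
    by (simp add: sum_distrib_left)
  finally show ?thesis .
qed

section \<open>The Laplace transform of \<open>\<tau>\<close>\<close>

definition tau_laplace :: "real \<Rightarrow> nat \<Rightarrow> real" where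
  "tau_laplace b n = (\<Sum>c\<in>bit_vectors n. exp (- b * real (tau_poly (poly_of_bits n c)))) / 2 ^ n"

lemma tau_laplace_le_1: "0 \<le> b \<Longrightarrow> tau_laplace b n \<le> 1"
proof -
  assume "0 \<le> b"
  hence "(\<Sum>c\<in>bit_vectors n. exp (- b * real (tau_poly (poly_of_bits n c)))) \<le> (\<Sum>c\<in>bit_vectors n. 1)"
    by (intro sum_mono) simp
  thus ?thesis by (simp add: tau_laplace_def card_bit_vectors)
qed

lemma tau_poly_poly_of_bits:
  "tau_poly (poly_of_bits n c) = n + tau_poly ((S_poly ^^ n) (poly_of_bits n c))"
  using tau_poly_shift[OF poly_of_bits_nonzero, of n n c] by (simp add: degree_poly_of_bits)

lemma sum_exp_tau_degree_le:
  fixes b :: real and n m :: nat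
  assumes "0 \<le> b" "m \<le> n"
  defines "H \<equiv> \<lambda>c. (S_poly ^^ n) (poly_of_bits n c)"
  shows "(\<Sum>c | c \<in> bit_vectors n \<and> degree (H c) = m. exp (- b * real (tau_poly (H c))))
    \<le> 2 ^ n * min (real (n choose m) / 2 ^ n) (tau_laplace b m)"
proof -
  let ?A = "{c. c \<in> bit_vectors n \<and> degree (H c) = m}"
  let ?g = "\<lambda>h. exp (- b * real (tau_poly h))"
  have "(\<Sum>c\<in>?A. ?g (H c)) \<le> (\<Sum>c\<in>?A. 1)"
    using assms(1) by (intro sum_mono) simp
  also have "\<dots> \<le> real (n choose m)"
    using card_degree_S_poly_pow_le_binomial[of n m] by (simp add: H_def)
  finally have by_binomial: "(\<Sum>c\<in>?A. ?g (H c)) \<le> real (n choose m)" .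
  have "(\<Sum>c\<in>?A. ?g (H c)) \<le> 2 ^ (n - m) * (\<Sum>y\<in>bit_vectors m. ?g (poly_of_bits m y))"
    unfolding H_def by (rule sum_S_poly_pow_degree_le) simp
  also have "\<dots> = 2 ^ (n - m) * 2 ^ m * tau_laplace b m"
    by (simp add: tau_laplace_def)
  also have "(2 :: real) ^ (n - m) * 2 ^ m = 2 ^ n"
    using assms(2) by (simp flip: power_add)
  finally have by_laplace: "(\<Sum>c\<in>?A. ?g (H c)) \<le> 2 ^ n * tau_laplace b m" .
  have "2 ^ n * min (real (n choose m) / 2 ^ n) (tau_laplace b m)
      = min (real (n choose m)) (2 ^ n * tau_laplace b m)"
    by (simp add: min_mult_distrib_left)
  with by_binomial by_laplace show ?thesis
    by simp
qed

lemma tau_laplace_recursion: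
  assumes "0 \<le> b"
  shows "tau_laplace b n \<le> exp (- b * n) * (\<Sum>m\<le>n. min (real (n choose m) / 2 ^ n) (tau_laplace b m))"
proof -
  define H where "H c = (S_poly ^^ n) (poly_of_bits n c)" for c
  let ?g = "\<lambda>h. exp (- b * real (tau_poly h))"
  have "?g (poly_of_bits n c) = exp (- b * n) * ?g (H c)" for c
    by (simp add: tau_poly_poly_of_bits H_def distrib_left flip: exp_add)
  hence "(\<Sum>c\<in>bit_vectors n. ?g (poly_of_bits n c)) = exp (- b * n) * (\<Sum>c\<in>bit_vectors n. ?g (H c))"
    by (simp add: sum_distrib_left)
  also have "(\<Sum>c\<in>bit_vectors n. ?g (H c))
      = (\<Sum>m\<le>n. \<Sum>c | c \<in> bit_vectors n \<and> degree (H c) = m. ?g (H c))"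
  proof (rule sum.group[symmetric])
    show "(\<lambda>c. degree (H c)) ` bit_vectors n \<subseteq> {..n}"
      using degree_S_poly_pow_le[OF poly_of_bits_nonzero]
      by (auto simp: H_def degree_poly_of_bits)
  qed simp_all
  also have "\<dots> \<le> (\<Sum>m\<le>n. 2 ^ n * min (real (n choose m) / 2 ^ n) (tau_laplace b m))"
    by (intro sum_mono) (use assms sum_exp_tau_degree_le in \<open>simp add: H_def\<close>)
  also have "exp (- b * n) * \<dots> = 2 ^ n * (exp (- b * n) *
      (\<Sum>m\<le>n. min (real (n choose m) / 2 ^ n) (tau_laplace b m)))"
    by (simp add: sum_distrib_left ac_simps)
  finally show ?thesis
    unfolding tau_laplace_def[of b n] by (simp add: pos_divide_le_eq ac_simps)
qed

section \<open>Sequences obeying the recursion decay exponentially\<close>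

lemma pmf_binomial_half:
  assumes "m \<le> n"
  shows "pmf (binomial_pmf n (1/2)) m = real (n choose m) / 2 ^ n"
proof -
  have "(1/2 :: real) ^ m * (1/2) ^ (n - m) = (1/2) ^ n"
    using assms by (simp flip: power_add)
  thus ?thesis
    by (simp add: pmf_binomial mult.assoc power_one_over)
qed

lemma binomial_lower_tail_le:
  fixes e :: real
  assumes "0 < n" "0 \<le> e"
  shows "(\<Sum>m | m \<le> n \<and> real m < (1/2 - e) * n. real (n choose m) / 2 ^ n) \<le> exp (- 2 * real n * e\<^sup>2)"
proof -
  let ?L = "{m. m \<le> n \<and> real m < (1/2 - e) * n}"
  have "(\<Sum>m\<in>?L. real (n choose m) / 2 ^ n) = (\<Sum>m\<in>?L. pmf (binomial_pmf n (1/2)) m)"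
    by (rule sum.cong[OF refl], rule pmf_binomial_half[symmetric]) simp
  also have "\<dots> = measure_pmf.prob (binomial_pmf n (1/2)) ?L"
    by (simp add: measure_measure_pmf_finite)
  also have "\<dots> \<le> measure_pmf.prob (binomial_pmf n (1/2)) {x. real x / real n \<le> 1/2 - e}"
    using assms(1) by (intro measure_pmf.finite_measure_mono) (auto simp: divide_le_eq)
  also have "\<dots> \<le> exp (- 2 * real n * e\<^sup>2)"
    using binomial_distribution.prob_le'[of "1/2" n e] assms by (simp add: binomial_distribution_def)
  finally show ?thesis .
qed

lemma geometric_tail_le:
  fixes t :: real
  assumes "0 \<le> t" "t < 1"
  shows "(\<Sum>m\<in>{m0..<n}. t ^ m) \<le> t ^ m0 / (1 - t)"
proof (cases "m0 \<le> n")
  case True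
  have "(\<Sum>m\<in>{m0..<n}. t ^ m) = t ^ m0 * (\<Sum>j<n - m0. t ^ j)"
    using True by (simp add: sum.atLeastLessThan_shift_0[of _ m0] power_add sum_distrib_left atLeast0LessThan)
  also have "\<dots> = t ^ m0 * ((1 - t ^ (n - m0)) / (1 - t))"
    using assms by (simp add: sum_gp_strict)
  also have "\<dots> \<le> t ^ m0 * (1 / (1 - t))"
    using assms by (intro mult_left_mono divide_right_mono) auto
  finally show ?thesis by simp
qed (use assms in simp)

lemma eventually_le_exp_mult:
  fixes c A :: real
  assumes "0 < c"
  shows "eventually (\<lambda>n. A \<le> exp (c * real n)) sequentially"
proof -
  have "filterlim (\<lambda>n. exp (c * real n)) at_top sequentially"
    by (intro filterlim_compose[OF exp_at_top] filterlim_tendsto_pos_mult_at_top[OF tendsto_const assms]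
        filterlim_real_sequentially)
  thus ?thesis by (simp add: filterlim_at_top)
qed

text \<open>Split at \<open>m = (1/2 - e) n\<close>: below it the binomial weights are small by Hoeffding's
  inequality, above it the bound for \<open>Z m\<close> is a geometric tail.\<close>

lemma sum_min_binomial_le:
  fixes Z :: "nat \<Rightarrow> real" and e K \<theta> :: real
  assumes "0 < n" "0 \<le> e" "0 \<le> K" "0 \<le> \<theta>" "\<theta> < 1"
    and IH: "\<And>m. m < n \<Longrightarrow> Z m \<le> K * \<theta> ^ m"
  shows "(\<Sum>m\<le>n. min (real (n choose m) / 2 ^ n) (Z m))
    \<le> exp (- 2 * real n * e\<^sup>2) + K * (\<theta> ^ nat \<lceil>(1/2 - e) * n\<rceil> / (1 - \<theta>)) + 1 / 2 ^ n"
proof -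
  define f where "f m = min (real (n choose m) / 2 ^ n) (Z m)" for m
  define m0 where "m0 = nat \<lceil>(1/2 - e) * n\<rceil>"
  define B where "B = {m. real m < (1/2 - e) * n}"
  have "(\<Sum>m\<le>n. f m) = (\<Sum>m\<in>{..<n} \<inter> B. f m) + (\<Sum>m\<in>{..<n} - B. f m) + f n"
    by (simp add: lessThan_Suc_atMost[symmetric] sum.Int_Diff)
  moreover have "(\<Sum>m\<in>{..<n} \<inter> B. f m) \<le> exp (- 2 * real n * e\<^sup>2)"
  proof -
    have "(\<Sum>m\<in>{..<n} \<inter> B. f m) \<le> (\<Sum>m\<in>{..<n} \<inter> B. real (n choose m) / 2 ^ n)"
      by (intro sum_mono) (simp add: f_def)
    also have "\<dots> \<le> (\<Sum>m | m \<le> n \<and> real m < (1/2 - e) * n. real (n choose m) / 2 ^ n)"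
      by (rule sum_mono2) (auto simp: B_def)
    also have "\<dots> \<le> exp (- 2 * real n * e\<^sup>2)"
      using assms(1,2) by (rule binomial_lower_tail_le)
    finally show ?thesis .
  qed
  moreover have "(\<Sum>m\<in>{..<n} - B. f m) \<le> K * (\<theta> ^ m0 / (1 - \<theta>))"
  proof -
    have "(\<Sum>m\<in>{..<n} - B. f m) \<le> (\<Sum>m\<in>{..<n} - B. K * \<theta> ^ m)"
      using IH by (intro sum_mono) (simp add: f_def min.coboundedI2)
    also have "\<dots> \<le> (\<Sum>m\<in>{m0..<n}. K * \<theta> ^ m)"
      using assms(3,4) by (intro sum_mono2) (auto simp: B_def m0_def nat_ceiling_le_eq)
    also have "\<dots> = K * (\<Sum>m\<in>{m0..<n}. \<theta> ^ m)"
      by (simp add: sum_distrib_left)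
    also have "\<dots> \<le> K * (\<theta> ^ m0 / (1 - \<theta>))"
      using assms(3-5) geometric_tail_le[of \<theta> m0 n] by (intro mult_left_mono) simp_all
    finally show ?thesis .
  qed
  moreover have "f n \<le> 1 / 2 ^ n"
    by (simp add: f_def min.coboundedI1)
  ultimately show ?thesis
    unfolding f_def m0_def by linarith
qed

lemma mult_exp_le_exp:
  fixes A u v :: real
  assumes "A \<le> exp (v - u)"
  shows "A * exp u \<le> exp v"
proof -
  from assms have "A * exp u \<le> exp (v - u) * exp u" by (rule mult_right_mono) simp
  thus ?thesis by (simp flip: exp_add)
qed

text \<open>Multiplied by \<open>exp (- b n)\<close>, each of the three terms of the bound in
  \<open>sum_min_binomial_le\<close> is at most \<open>\<theta>\<^sup>n / 3\<close> as soon as \<open>n\<close> is large enough for the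
  respective hypothesis \<open>3 \<le> exp (\<dots>)\<close>.\<close>

context
  fixes d b \<theta> :: real
  assumes d: "0 < d" "d \<le> 1/2" and b_def: "b = (d / 8)\<^sup>2" and \<theta>_def: "\<theta> = exp (- (2 - d) * b)"
begin

lemma theta_pos: "0 < \<theta>" and theta_less_1: "\<theta> < 1"
  using d by (simp_all add: \<theta>_def b_def mult_neg_pos)

lemma theta_power: "\<theta> ^ k = exp (- (2 - d) * b * k)"
  by (simp add: \<theta>_def ac_simps flip: exp_of_nat_mult)

lemma binomial_term_le:
  assumes "3 \<le> exp (b * n)"
  shows "3 * (exp (- b * n) * exp (- 2 * real n * (d / 8)\<^sup>2)) \<le> \<theta> ^ n"
proof -
  have eq: "- (2 - d) * b * n - (- b * n + - 2 * real n * (d / 8)\<^sup>2) = b * n + d * b * n"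
    by (simp add: b_def algebra_simps)
  have "exp (b * n) \<le> exp (b * n + d * b * n)"
    using d by (simp add: b_def)
  hence "3 \<le> exp (- (2 - d) * b * n - (- b * n + - 2 * real n * (d / 8)\<^sup>2))"
    unfolding eq using assms by linarith
  thus ?thesis
    unfolding theta_power exp_add[symmetric] by (rule mult_exp_le_exp)
qed

lemma geometric_term_le:
  assumes "3 / (1 - \<theta>) \<le> exp (b * d / 4 * n)" and m0: "(1/2 - d / 8) * n \<le> m0"
  shows "3 * (exp (- b * n) * (\<theta> ^ m0 / (1 - \<theta>))) \<le> \<theta> ^ n"
proof -
  have "\<theta> ^ m0 \<le> exp (- (2 - d) * b * ((1/2 - d / 8) * n))"
    unfolding theta_power using d m0 by (simp add: b_def mult_le_cancel_left_pos)
  hence "3 * (exp (- b * n) * (\<theta> ^ m0 / (1 - \<theta>)))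
      \<le> 3 / (1 - \<theta>) * (exp (- b * n) * exp (- (2 - d) * b * ((1/2 - d / 8) * n)))"
    using theta_less_1 by (simp add: mult_left_mono divide_right_mono)
  also have "\<dots> = 3 / (1 - \<theta>) * exp (- b * n + - (2 - d) * b * ((1/2 - d / 8) * n))"
    by (simp only: exp_add)
  also have "\<dots> \<le> exp (- (2 - d) * b * n)"
  proof (rule mult_exp_le_exp)
    have eq: "- (2 - d) * b * n - (- b * n + - (2 - d) * b * ((1/2 - d / 8) * n))
        = b * d / 4 * n + d * d * b * n / 8"
      by (simp add: field_simps)
    have "exp (b * d / 4 * n) \<le> exp (b * d / 4 * n + d * d * b * n / 8)"
      using d by (simp add: b_def)
    thus "3 / (1 - \<theta>) \<le> exp (- (2 - d) * b * n - (- b * n + - (2 - d) * b * ((1/2 - d / 8) * n)))"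
      unfolding eq using assms(1) by linarith
  qed
  finally show ?thesis
    unfolding theta_power .
qed

lemma top_term_le:
  assumes "3 \<le> exp ((ln 2 - (1 - d) * b) * n)"
  shows "3 * (exp (- b * n) * (1 / 2 ^ n)) \<le> \<theta> ^ n"
proof -
  have "(2 :: real) ^ n = exp (ln 2 * n)"
    by (simp add: exp_of_nat_mult mult.commute)
  hence "exp (- b * n) * (1 / 2 ^ n) = exp (- b * n + - (ln 2 * n))"
    by (simp only: exp_add exp_minus divide_inverse mult.left_neutral)
  also have "3 * \<dots> \<le> exp (- (2 - d) * b * n)"
  proof (rule mult_exp_le_exp)
    have "- (2 - d) * b * n - (- b * n + - (ln 2 * n)) = (ln 2 - (1 - d) * b) * n"
      by (simp add: algebra_simps)
    thus "3 \<le> exp (- (2 - d) * b * n - (- b * n + - (ln 2 * n)))"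
      using assms by simp
  qed
  finally show ?thesis
    unfolding theta_power by simp
qed

lemma eventually_recursion_hypotheses:
  "eventually (\<lambda>n. 3 \<le> exp (b * n) \<and> 3 / (1 - \<theta>) \<le> exp (b * d / 4 * n)
      \<and> 3 \<le> exp ((ln 2 - (1 - d) * b) * n)) sequentially"
proof -
  have "d\<^sup>2 \<le> (1/2)\<^sup>2"
    using d by (intro power_mono) auto
  hence b: "0 < b" "b \<le> 1/256"
    using d by (simp_all add: b_def power_divide)
  hence "(1 - d) * b < ln 2"
    using ln2_ge_two_thirds d mult_left_le_one_le[of b "1 - d"] by linarith
  thus ?thesis
    using b d by (intro eventually_conj eventually_le_exp_mult) simp_all
qed

lemma decay_induction_step:
  fixes Z :: "nat \<Rightarrow> real" and K :: real and n :: nat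
  assumes K: "1 \<le> K"
    and Z_rec: "Z n \<le> exp (- b * n) * (\<Sum>m\<le>n. min (real (n choose m) / 2 ^ n) (Z m))"
    and IH: "\<And>m. m < n \<Longrightarrow> Z m \<le> K * \<theta> ^ m"
    and large: "3 \<le> exp (b * n)" "3 / (1 - \<theta>) \<le> exp (b * d / 4 * n)"
      "3 \<le> exp ((ln 2 - (1 - d) * b) * n)"
  shows "Z n \<le> K * \<theta> ^ n"
proof -
  define m0 where "m0 = nat \<lceil>(1/2 - d / 8) * n\<rceil>"
  have "n \<noteq> 0"
  proof
    assume "n = 0"
    with large(1) show False by simp
  qed
  hence "(\<Sum>m\<le>n. min (real (n choose m) / 2 ^ n) (Z m))
      \<le> exp (- 2 * real n * (d / 8)\<^sup>2) + K * (\<theta> ^ m0 / (1 - \<theta>)) + 1 / 2 ^ n"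
    using sum_min_binomial_le[of n "d / 8" K \<theta> Z] IH d K theta_pos theta_less_1
    by (simp add: m0_def)
  hence "Z n \<le> exp (- b * n) * (exp (- 2 * real n * (d / 8)\<^sup>2) + K * (\<theta> ^ m0 / (1 - \<theta>)) + 1 / 2 ^ n)"
    using Z_rec by (meson exp_ge_zero mult_left_mono order_trans)
  also have "\<dots> = exp (- b * n) * exp (- 2 * real n * (d / 8)\<^sup>2)
      + K * (exp (- b * n) * (\<theta> ^ m0 / (1 - \<theta>))) + exp (- b * n) * (1 / 2 ^ n)"
    by (simp add: algebra_simps)
  also have "\<dots> \<le> \<theta> ^ n / 3 + K * (\<theta> ^ n / 3) + \<theta> ^ n / 3"
  proof -
    have "(1/2 - d / 8) * n \<le> m0"
      unfolding m0_def by (rule real_nat_ceiling_ge)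
    hence "K * (exp (- b * n) * (\<theta> ^ m0 / (1 - \<theta>))) \<le> K * (\<theta> ^ n / 3)"
      using geometric_term_le[OF large(2)] K by (intro mult_left_mono) (simp_all add: ac_simps)
    thus ?thesis
      using binomial_term_le[OF large(1)] top_term_le[OF large(3)] by linarith
  qed
  also have "\<dots> \<le> K * \<theta> ^ n"
    using K theta_pos by (simp add: field_simps)
  finally show ?thesis .
qed

end

lemma exponential_decay_of_recursion:
  fixes Z :: "nat \<Rightarrow> real" and d :: real
  defines "b \<equiv> (d / 8)\<^sup>2"
  assumes d: "0 < d" "d \<le> 1/2" and Z_le_1: "\<And>n. Z n \<le> 1"
    and Z_rec: "\<And>n. Z n \<le> exp (- b * n) * (\<Sum>m\<le>n. min (real (n choose m) / 2 ^ n) (Z m))"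
  shows "\<exists>K. \<forall>n. Z n \<le> K * exp (- (2 - d) * b * n)"
proof -
  define \<theta> where "\<theta> = exp (- (2 - d) * b)"
  note params = d meta_eq_to_obj_eq[OF b_def] \<theta>_def
  obtain N :: nat where large: "\<And>n. N \<le> n \<Longrightarrow> 3 \<le> exp (b * n) \<and> 3 / (1 - \<theta>) \<le> exp (b * d / 4 * n)
      \<and> 3 \<le> exp ((ln 2 - (1 - d) * b) * n)"
    using eventually_recursion_hypotheses[OF params] by (auto simp: eventually_sequentially)
  have \<theta>: "0 < \<theta>" "\<theta> < 1"
    using theta_pos[OF params] theta_less_1[OF params] by simp_all
  define K where "K = 1 / \<theta> ^ N"
  have K: "1 \<le> K"
    using \<theta> by (simp add: K_def power_le_one)
  have "Z n \<le> K * \<theta> ^ n" for n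
  proof (induction n rule: less_induct)
    case (less n)
    show ?case
    proof (cases "N \<le> n")
      case True
      thus ?thesis
        using decay_induction_step[OF params K Z_rec less.IH] large by blast
    next
      case False
      hence "\<theta> ^ N \<le> \<theta> ^ n"
        using \<theta> by (simp add: power_decreasing)
      hence "1 \<le> K * \<theta> ^ n"
        using \<theta> by (simp add: K_def field_simps)
      thus ?thesis
        using Z_le_1[of n] by linarith
    qed
  qed
  thus ?thesis
    using theta_power[OF params] by auto
qed

section \<open>A lower bound for the mean of \<open>\<tau>\<close>\<close>

definition mean_tau :: "nat \<Rightarrow> real" where
  "mean_tau n = (\<Sum>c\<in>bit_vectors n. real (tau_poly (poly_of_bits n c))) / 2 ^ n"

lemma bit_vectors_nonempty: "bit_vectors n \<noteq> {}"
  using card_bit_vectors[of n] by auto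

lemma tau_laplace_pos: "0 < tau_laplace b n"
  unfolding tau_laplace_def
  by (intro divide_pos_pos sum_pos finite_bit_vectors bit_vectors_nonempty) simp_all

lemma exp_mean_le_mean_exp:
  fixes a :: "'a \<Rightarrow> real"
  assumes "finite A" "A \<noteq> {}"
  shows "exp ((\<Sum>x\<in>A. a x) / card A) \<le> (\<Sum>x\<in>A. exp (a x)) / card A"
proof -
  define \<mu> where "\<mu> = (\<Sum>x\<in>A. a x) / card A"
  have card: "0 < real (card A)"
    using assms by (simp add: card_gt_0_iff)
  have "exp \<mu> * (1 + (a x - \<mu>)) \<le> exp (a x)" for x
  proof -
    have "exp \<mu> * (1 + (a x - \<mu>)) \<le> exp \<mu> * exp (a x - \<mu>)"
      by (intro mult_left_mono exp_ge_add_one_self) simp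
    thus ?thesis by (simp flip: exp_add)
  qed
  hence "(\<Sum>x\<in>A. exp \<mu> * (1 + (a x - \<mu>))) \<le> (\<Sum>x\<in>A. exp (a x))"
    by (rule sum_mono)
  moreover have "(\<Sum>x\<in>A. exp \<mu> * (1 + (a x - \<mu>))) = exp \<mu> * (card A + ((\<Sum>x\<in>A. a x) - card A * \<mu>))"
    by (simp add: sum.distrib sum_subtractf flip: sum_distrib_left)
  moreover have "(\<Sum>x\<in>A. a x) - card A * \<mu> = 0"
    using card by (simp add: \<mu>_def)
  ultimately show ?thesis
    using card by (simp add: \<mu>_def pos_le_divide_eq)
qed

text \<open>Jensen's inequality turns the exponential decay of \<open>tau_laplace b\<close> into a lower
  bound for the mean.\<close>

lemma mean_tau_lower_bound:
  assumes "0 < d" "d \<le> 1/2"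
  shows "\<exists>C. \<forall>n. (2 - d) * n - C \<le> mean_tau n"
proof -
  define b where "b = (d / 8)\<^sup>2"
  have b: "0 < b" using assms by (simp add: b_def)
  have "\<exists>K. \<forall>n. tau_laplace b n \<le> K * exp (- (2 - d) * b * n)"
    using assms tau_laplace_le_1 tau_laplace_recursion b unfolding b_def
    by (intro exponential_decay_of_recursion) simp_all
  then obtain K where K: "\<And>n. tau_laplace b n \<le> K * exp (- (2 - d) * b * n)"
    by blast
  have "0 < K"
    using K[of 0] tau_laplace_pos[of b 0] by simp
  have "(2 - d) * n - ln K / b \<le> mean_tau n" for n
  proof -
    have "exp (- b * mean_tau n) \<le> tau_laplace b n"
      using exp_mean_le_mean_exp[OF finite_bit_vectors bit_vectors_nonempty,
          of "\<lambda>c. - b * real (tau_poly (poly_of_bits n c))" n]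
      by (simp add: mean_tau_def tau_laplace_def card_bit_vectors sum_distrib_left)
    also have "\<dots> \<le> K * exp (- (2 - d) * b * n)"
      by (rule K)
    also have "\<dots> = exp (ln K + - (2 - d) * b * n)"
      using \<open>0 < K\<close> by (simp only: exp_add exp_ln)
    finally have "(2 - d) * n * b - ln K \<le> mean_tau n * b"
      by (simp add: algebra_simps)
    thus ?thesis
      using b by (simp add: field_simps)
  qed
  thus ?thesis by blast
qed

section \<open>The integral over \<open>\<mu>\<^sub>n\<close>\<close>

abbreviation coins :: "(nat \<Rightarrow> bit) measure" where
  "coins \<equiv> PiM UNIV (\<lambda>_. coin)"

definition cylinder :: "nat \<Rightarrow> (nat \<Rightarrow> bit) \<Rightarrow> (nat \<Rightarrow> bit) set" where
  "cylinder n v = prod_emb UNIV (\<lambda>_. coin) {..<n} (PiE {..<n} (\<lambda>i. {v i}))"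

lemma space_coin [simp]: "space coin = UNIV"
  by (simp add: coin_def)

lemma sets_coin [simp]: "sets coin = UNIV"
  by (simp add: coin_def)

lemma mem_cylinder: "c \<in> cylinder n v \<longleftrightarrow> (\<forall>i<n. c i = v i)"
  by (auto simp: cylinder_def prod_emb_def PiE_iff)

lemma cylinder_in_sets: "cylinder n v \<in> sets coins"
  unfolding cylinder_def by (rule sets_PiM_I) auto

lemma product_prob_space_coin: "product_prob_space (\<lambda>_ :: nat. coin)"
  unfolding product_prob_space_def product_prob_space_axioms_def product_sigma_finite_def
  by (simp add: coin_def prob_space_measure_pmf prob_space_imp_sigma_finite)

lemma emeasure_cylinder: "emeasure coins (cylinder n v) = ennreal ((1/2) ^ n)"
proof -
  have "emeasure coin {x} = ennreal (1/2)" for x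
    unfolding coin_def by (subst emeasure_pmf_of_set) (auto simp: card_UNIV_bit)
  hence "emeasure coins (cylinder n v) = (\<Prod>i\<in>{..<n}. ennreal (1/2))"
    unfolding cylinder_def by (subst product_prob_space.emeasure_PiM_emb[OF product_prob_space_coin]) auto
  also have "\<dots> = ennreal ((1/2) ^ n)"
    by (simp only: prod_constant card_lessThan) (rule ennreal_power, simp)
  finally show ?thesis .
qed

lemma tau_r_of_eq_sum_cylinders:
  "ennreal (real (tau (r_of n c)))
    = (\<Sum>v\<in>bit_vectors n. ennreal (real (tau_poly (poly_of_bits n v))) * indicator (cylinder n v) c)"
proof -
  define v0 where "v0 = restrict c {..<n}"
  have v0: "v0 \<in> bit_vectors n"
    by (simp add: v0_def bit_vectors_def)
  have "c \<in> cylinder n v \<longleftrightarrow> v = v0" if "v \<in> bit_vectors n" for v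
    using bit_vectors_eqI[OF that v0] by (auto simp: mem_cylinder v0_def)
  hence "(\<Sum>v\<in>bit_vectors n. ennreal (real (tau_poly (poly_of_bits n v))) * indicator (cylinder n v) c)
      = ennreal (real (tau_poly (poly_of_bits n v0)))"
    using v0 by (simp add: indicator_def sum.delta' if_distrib cong: sum.cong)
  also have "poly_of_bits n v0 = poly_of_bits n c"
    by (rule poly_of_bits_cong) (simp add: v0_def)
  finally show ?thesis
    by (simp add: tau_r_of)
qed

lemma nn_integral_tau_mu: "(\<integral>\<^sup>+ r. ennreal (real (tau r)) \<partial>mu n) = ennreal (mean_tau n)"
proof -
  have measurable: "(\<lambda>c. ennreal (real (tau (r_of n c)))) \<in> borel_measurable coins"
    unfolding tau_r_of_eq_sum_cylinders by (intro borel_measurable_sum borel_measurable_times_ennreal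
        borel_measurable_const borel_measurable_indicator cylinder_in_sets)
  have "(\<integral>\<^sup>+ r. ennreal (real (tau r)) \<partial>mu n) = (\<integral>\<^sup>+ c. ennreal (real (tau (r_of n c))) \<partial>coins)"
    unfolding mu_def by (rule nn_integral_embed_measure[OF inj_r_of])
      (rule measurable_embed_measure1[where f = "r_of n", OF measurable])
  also have "\<dots> = (\<Sum>v\<in>bit_vectors n.
      \<integral>\<^sup>+ c. ennreal (real (tau_poly (poly_of_bits n v))) * indicator (cylinder n v) c \<partial>coins)"
    unfolding tau_r_of_eq_sum_cylinders by (intro nn_integral_sum borel_measurable_times_ennreal
        borel_measurable_const borel_measurable_indicator cylinder_in_sets)
  also have "\<dots> = (\<Sum>v\<in>bit_vectors n. ennreal (real (tau_poly (poly_of_bits n v))) * emeasure coins (cylinder n v))"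
    by (intro sum.cong refl nn_integral_cmult_indicator cylinder_in_sets)
  also have "\<dots> = (\<Sum>v\<in>bit_vectors n. ennreal (real (tau_poly (poly_of_bits n v)) * (1/2) ^ n))"
    by (simp add: emeasure_cylinder ennreal_mult)
  also have "\<dots> = ennreal (\<Sum>v\<in>bit_vectors n. real (tau_poly (poly_of_bits n v)) * (1/2) ^ n)"
    by (rule sum_ennreal) simp
  also have "(\<Sum>v\<in>bit_vectors n. real (tau_poly (poly_of_bits n v)) * (1/2) ^ n) = mean_tau n"
    unfolding mean_tau_def by (simp add: power_one_over sum_divide_distrib)
  finally show ?thesis .
qed

theorem proposition2p13:
  fixes \<epsilon> :: real
  assumes "\<epsilon> > 0"
  shows "\<exists>n0::nat. \<forall>n\<ge>n0.
           ennreal (2 * (1 - \<epsilon>) * real n) \<le> (\<integral>\<^sup>+ r. ennreal (real (tau r)) \<partial>mu n)"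
proof -
  define d where "d = min \<epsilon> (1/2)"
  have d: "0 < d" "d \<le> 1/2" "d \<le> \<epsilon>"
    using assms by (auto simp: d_def)
  obtain C where C: "\<And>n. (2 - d) * n - C \<le> mean_tau n"
    using mean_tau_lower_bound[OF d(1,2)] by blast
  have bound: "2 * (1 - \<epsilon>) * n \<le> mean_tau n" if "nat \<lceil>C / \<epsilon>\<rceil> \<le> n" for n
  proof -
    have "C / \<epsilon> \<le> real (nat \<lceil>C / \<epsilon>\<rceil>)"
      by (rule real_nat_ceiling_ge)
    also have "\<dots> \<le> n"
      using that by linarith
    finally have "C \<le> \<epsilon> * n"
      using assms by (simp add: pos_divide_le_eq mult.commute)
    moreover have "d * n \<le> \<epsilon> * n"
      using d by (simp add: mult_right_mono)
    ultimately show ?thesis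
      using C[of n] by (simp add: algebra_simps)
  qed
  show ?thesis
    unfolding nn_integral_tau_mu using bound by (blast intro: ennreal_leI)
qed

end
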